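(* For every $\lambda>\lambda^*$, $e(\lambda)\in I_\lambda\cap(-\infty,0)$; that is, $e(\lambda)>-1/(\gamma b^* )$, $G(e(\lambda))<\lambda/a^*$, and $e(\lambda)<0$.
   Context: Standing setup. Let $\gamma>0$; let $a_1,\dots,a_p>0$ with weights $\omega_i>0$, $\sum_i\omega_i=1$, and $b_1,\dots,b_n>0$ with weights $\pi_j>0$, $\sum_j\pi_j=1$; put $a^*=\max_i a_i$, $b^*=\max_j b_j$. Let $\mu$ be the limiting spectral distribution of $\mathbf{N}\mathbf{N}^T$ where $\mathbf{N}=\mathbf{A}^{1/2}\mathbf{G}\mathbf{B}^{1/2}$ is $k\times l$, $\mathbf{G}$ has iid mean-zero entries of variance $1/l$, $k/l\to\gamma$, and the spectral distributions of $\mathbf{A},\mathbf{B}$ converge to $\nu=\sum_i\omega_i\delta_{a_i}$ and $\underline{\nu}=\sum_j\pi_j\delta_{b_j}$. $\mu$ is a compactly supported probability measure on $[0,\infty)$; $\lambda^*>0$ is the right endpoint of its support, and $s(\lambda)=\int\frac{d\mu(t)}{t-\lambda}$ for $\lambda>\lambda^*$. Define $G(e)=\sum_{j=1}^n\frac{b_j\pi_j}{1+\gamma b_j e}$, $J=\{e: e>-1/(\gamma b^* )\}$, and for $\lambda>0$, $I_\lambda=\{e\in J: G(e)<\lambda/a^*\}$. Define $F(\lambda,e)=e-\sum_{i=1}^p\frac{a_i\omega_i}{a_iG(e)-\lambda}$. It is known (master equations) that there is a continuous (indeed smooth) real function $e(\lambda)$ on $(\lambda^*,\infty)$, never equal to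 a pole $-1/(\gamma b_j)$ of $G$ and with $a_iG(e(\lambda))\ne\lambda$, satisfying $s(\lambda)=\sum_{i=1}^p\frac{\omega_i}{a_iG(e(\lambda))-\lambda}$ and $e(\lambda)=\sum_{i=1}^p\frac{a_i\omega_i}{a_iG(e(\lambda))-\lambda}$, i.e. $F(\lambda,e(\lambda))=0$. *)

theory Defs
  imports "HOL-Probability.Probability"
begin

definition msupp :: "real measure \<Rightarrow> real set" where
  "msupp M = {x. \<forall>\<epsilon>>0. measure M {x - \<epsilon><..<x + \<epsilon>} > 0}"

definition stieltjes :: "real measure \<Rightarrow> real \<Rightarrow> real" where
  "stieltjes M l = (\<integral>t. 1 / (t - l) \<partial>M)"

definition Gfun :: "real \<Rightarrow> nat \<Rightarrow> (nat \<Rightarrow> real) \<Rightarrow> (nat \<Rightarrow> real) \<Rightarrow> real \<Rightarrow> real" where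
  "Gfun \<gamma> n b \<pi> e = (\<Sum>j<n. b j * \<pi> j / (1 + \<gamma> * b j * e))"

definition Ilam :: "real \<Rightarrow> nat \<Rightarrow> (nat \<Rightarrow> real) \<Rightarrow> (nat \<Rightarrow> real) \<Rightarrow> real \<Rightarrow> real \<Rightarrow> real \<Rightarrow> real set" where
  "Ilam \<gamma> n b \<pi> astar bstar l =
     {e. e > - 1 / (\<gamma> * bstar) \<and> Gfun \<gamma> n b \<pi> e < l / astar}"

end

theory Submission
  imports Defs
begin

text \<open>The master equations give the identity \<open>G(e) e = 1 + \<lambda> s(\<lambda>)\<close>, and since \<open>\<mu>\<close> lives on
  \<open>[0, \<lambda>*]\<close> we have \<open>-1/(\<lambda> - \<lambda>*) \<le> s(\<lambda>) \<le> -1/\<lambda>\<close>; so the product \<open>G(e(\<lambda>)) e(\<lambda>)\<close> lies in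
  \<open>[-\<lambda>*/(\<lambda> - \<lambda>*), 0]\<close>. For one sufficiently large \<open>\<lambda>\<^sub>0\<close> this forces
  \<open>1 + \<gamma> b* e(\<lambda>\<^sub>0) > 0\<close> and \<open>a* G(e(\<lambda>\<^sub>0)) < \<lambda>\<^sub>0\<close>. Both quantities depend continuously on \<open>\<lambda>\<close>
  and never vanish on \<open>(\<lambda>*, \<infinity>)\<close>, so they keep their sign there. Finally every summand of
  \<open>e(\<lambda>) = \<Sum>\<^sub>i a\<^sub>i \<omega>\<^sub>i / (a\<^sub>i G(e(\<lambda>)) - \<lambda>)\<close> is then negative.\<close>

lemma AE_in_msupp:
  assumes "finite_measure M" and "sets M = sets borel"
  shows "AE x in M. x \<in> msupp M"
proof -
  interpret finite_measure M by fact
  define N where "N = {S. \<exists>x \<epsilon>. \<epsilon> > 0 \<and> S = {x - \<epsilon><..<x + \<epsilon>} \<and> measure M S = 0}"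
  have "\<And>S. S \<in> N \<Longrightarrow> open S" by (auto simp: N_def)
  then obtain N' where N': "N' \<subseteq> N" "countable N'" "\<Union>N' = \<Union>N" using Lindelof by metis
  have "AE x in M. \<forall>S\<in>N'. x \<notin> S"
  proof (subst AE_ball_countable[OF N'(2)], intro ballI)
    fix S assume "S \<in> N'"
    then have "S \<in> sets M" "measure M S = 0" using N' assms(2) by (auto simp: N_def)
    then show "AE x in M. x \<notin> S"
      by (intro AE_not_in) (simp add: null_sets_def emeasure_eq_measure)
  qed
  then show ?thesis
  proof (rule eventually_mono)
    fix x assume "\<forall>S\<in>N'. x \<notin> S"
    then have "x \<notin> \<Union>N" using N'(3) by auto
    then have "\<forall>\<epsilon>>0. measure M {x - \<epsilon><..<x + \<epsilon>} \<noteq> 0"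
      unfolding N_def by force
    then show "x \<in> msupp M" by (simp add: msupp_def less_le)
  qed
qed

lemma stieltjes_bounds:
  assumes "prob_space M" and "sets M = sets borel"
    and supp: "msupp M \<subseteq> {0..T}" and "0 \<le> T" "T < l"
  shows "- 1 / (l - T) \<le> stieltjes M l" "stieltjes M l \<le> - 1 / l"
proof -
  interpret prob_space M by fact
  have bounds: "AE t in M. - 1 / (l - T) \<le> 1 / (t - l) \<and> 1 / (t - l) \<le> - 1 / l"
    using AE_in_msupp[OF finite_measure_axioms assms(2)]
  proof (rule eventually_mono)
    fix t assume "t \<in> msupp M"
    then have "0 \<le> t" "t \<le> T" using supp by auto
    then show "- 1 / (l - T) \<le> 1 / (t - l) \<and> 1 / (t - l) \<le> - 1 / l"
      using assms(4,5) by (simp add: divide_simps)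
  qed
  have "integrable M (\<lambda>t. 1 / (t - l))"
  proof (rule integrable_const_bound[where B = "1 / (l - T) + 1 / l"])
    show "AE t in M. norm (1 / (t - l)) \<le> 1 / (l - T) + 1 / l"
      using bounds
    proof (rule eventually_mono)
      fix t assume "- 1 / (l - T) \<le> 1 / (t - l) \<and> 1 / (t - l) \<le> - 1 / l"
      moreover have "0 < 1 / l" "0 < 1 / (l - T)" using assms(4,5) by auto
      ultimately show "norm (1 / (t - l)) \<le> 1 / (l - T) + 1 / l"
        unfolding real_norm_def by linarith
    qed
    show "(\<lambda>t. 1 / (t - l)) \<in> borel_measurable M"
      by (simp add: measurable_cong_sets[OF assms(2) refl])
  qed
  then show "- 1 / (l - T) \<le> stieltjes M l" "stieltjes M l \<le> - 1 / l"
    unfolding stieltjes_def using integral_ge_const integral_le_const bounds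
    by (auto elim: eventually_mono)
qed

lemma continuous_on_nonzero_pos_imp_pos:
  fixes f :: "'a::topological_space \<Rightarrow> real"
  assumes "connected S" "continuous_on S f" "\<forall>z\<in>S. f z \<noteq> 0"
    and "x \<in> S" "y \<in> S" "f x > 0"
  shows "f y > 0"
proof (rule ccontr)
  assume "\<not> f y > 0"
  then have "f y < 0" using assms(3,5) by force
  moreover have "connected (f ` S)" using assms(1,2) by (rule connected_continuous_image[rotated])
  ultimately have "0 \<in> f ` S"
    using connectedD_interval[of "f ` S" "f y" "f x" 0] assms(4-6) by auto
  then show False using assms(3) by auto
qed

locale spectral_weights =
  fixes \<gamma> :: real and p n :: nat and a \<omega> b \<pi> :: "nat \<Rightarrow> real"
  assumes \<gamma>_pos: "\<gamma> > 0"
    and p_pos: "p \<ge> 1" and n_pos: "n \<ge> 1"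
    and a_pos: "\<forall>i<p. a i > 0" and \<omega>_pos: "\<forall>i<p. \<omega> i > 0" and \<omega>_sum: "(\<Sum>i<p. \<omega> i) = 1"
    and b_pos: "\<forall>j<n. b j > 0" and \<pi>_pos: "\<forall>j<n. \<pi> j > 0" and \<pi>_sum: "(\<Sum>j<n. \<pi> j) = 1"
begin

definition amax :: real where "amax = Max (a ` {..<p})"
definition bmax :: real where "bmax = Max (b ` {..<n})"

definition resolvent_sum :: "real \<Rightarrow> real \<Rightarrow> real" where
  "resolvent_sum l x = (\<Sum>i<p. a i * \<omega> i / (a i * x - l))"

lemma a_le_amax: "i < p \<Longrightarrow> a i \<le> amax"
  unfolding amax_def by simp

lemma b_le_bmax: "j < n \<Longrightarrow> b j \<le> bmax"
  unfolding bmax_def by simp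

lemma amax_attained: "\<exists>i<p. a i = amax"
proof -
  have "amax \<in> a ` {..<p}"
    unfolding amax_def using p_pos by (intro Max_in) (auto simp: lessThan_empty_iff)
  then show ?thesis by auto
qed

lemma bmax_attained: "\<exists>j<n. b j = bmax"
proof -
  have "bmax \<in> b ` {..<n}"
    unfolding bmax_def using n_pos by (intro Max_in) (auto simp: lessThan_empty_iff)
  then show ?thesis by auto
qed

lemma amax_pos: "amax > 0"
  using amax_attained a_pos by force

lemma bmax_pos: "bmax > 0"
  using bmax_attained b_pos by force

lemma mul_resolvent_sum:
  assumes "\<forall>i<p. a i * x \<noteq> l"
  shows "x * resolvent_sum l x = 1 + l * (\<Sum>i<p. \<omega> i / (a i * x - l))"
proof -
  have "x * resolvent_sum l x = (\<Sum>i<p. \<omega> i + l * (\<omega> i / (a i * x - l)))"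
    unfolding resolvent_sum_def sum_distrib_left
  proof (rule sum.cong[OF refl])
    fix i assume "i \<in> {..<p}"
    then have "a i * x - l \<noteq> 0" using assms by auto
    then show "x * (a i * \<omega> i / (a i * x - l)) = \<omega> i + l * (\<omega> i / (a i * x - l))"
      by (simp add: field_simps)
  qed
  then show ?thesis by (simp add: sum.distrib sum_distrib_left \<omega>_sum)
qed

lemma resolvent_product_bounds:
  assumes "prob_space M" "sets M = sets borel" "msupp M \<subseteq> {0..T}" "0 \<le> T" "T < l"
    and "\<forall>i<p. a i * x \<noteq> l"
    and "stieltjes M l = (\<Sum>i<p. \<omega> i / (a i * x - l))"
  shows "x * resolvent_sum l x \<le> 0" "(l - T) * (x * - resolvent_sum l x) \<le> T"
proof -
  have s: "- 1 / (l - T) \<le> stieltjes M l" "stieltjes M l \<le> - 1 / l"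
    using stieltjes_bounds[OF assms(1-5)] by auto
  have xr: "x * resolvent_sum l x = 1 + l * stieltjes M l"
    using mul_resolvent_sum[OF assms(6)] assms(7) by simp
  have l: "l > 0" "l - T > 0" using assms(4,5) by auto
  have "l * stieltjes M l \<le> -1" using s(2) l by (simp add: divide_simps mult.commute)
  then show "x * resolvent_sum l x \<le> 0" using xr by simp
  have "(l - T) * stieltjes M l \<ge> -1" using s(1) l by (simp add: divide_simps mult.commute)
  then have "l * ((l - T) * stieltjes M l) \<ge> - l" using l(1) mult_left_mono by fastforce
  moreover have "(l - T) * (x * - resolvent_sum l x) = T - l - l * ((l - T) * stieltjes M l)"
    using xr by (simp add: algebra_simps)
  ultimately show "(l - T) * (x * - resolvent_sum l x) \<le> T" by linarith
qed

lemma resolvent_sum_neg: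
  assumes "amax * x < l" "l > 0"
  shows "resolvent_sum l x < 0"
proof -
  have "a i * \<omega> i / (a i * x - l) < 0" if "i < p" for i
  proof -
    have "a i * x < l"
    proof (cases "x \<ge> 0")
      case True
      then show ?thesis using a_le_amax[OF that] assms(1) mult_right_mono[of "a i" amax x] by simp
    next
      case False
      then show ?thesis using a_pos that assms(2) mult_pos_neg[of "a i" x] by simp
    qed
    then show ?thesis using a_pos \<omega>_pos that by (simp add: divide_pos_neg)
  qed
  then have "resolvent_sum l x < (\<Sum>i<p. 0)"
    unfolding resolvent_sum_def using p_pos by (intro sum_strict_mono) (auto simp: lessThan_empty_iff)
  then show ?thesis by simp
qed

lemma resolvent_sum_lower_bound:
  assumes "0 \<le> x" "2 * amax * x \<le> l" "l > 0"
  shows "- 2 * amax \<le> l * resolvent_sum l x"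
proof -
  have "- 2 * amax * \<omega> i \<le> l * (a i * \<omega> i / (a i * x - l))" if "i < p" for i
  proof -
    have ai: "0 < a i" "0 < \<omega> i" "a i \<le> amax" using a_pos \<omega>_pos a_le_amax that by auto
    have "2 * a i * x \<le> 2 * amax * x" using ai assms(1) by (simp add: mult_right_mono)
    then have d: "l \<le> 2 * (l - a i * x)" using assms(2) by simp
    have "l * (a i * \<omega> i) \<le> 2 * (l - a i * x) * (a i * \<omega> i)"
      using d ai by (intro mult_right_mono) auto
    then have "- 2 * (a i * \<omega> i) \<le> l * (a i * \<omega> i / (a i * x - l))"
      using d assms(3) by (simp add: divide_simps algebra_simps)
    moreover have "amax * \<omega> i \<ge> a i * \<omega> i" using ai by (simp add: mult_right_mono)
    ultimately show ?thesis by simp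
  qed
  then have "(\<Sum>i<p. - 2 * amax * \<omega> i) \<le> l * resolvent_sum l x"
    unfolding resolvent_sum_def sum_distrib_left by (intro sum_mono) auto
  then show ?thesis by (simp add: sum_negf \<omega>_sum flip: sum_distrib_left)
qed

lemma Gfun_le_twice_bmax:
  assumes "e \<le> 0" "2 * \<gamma> * bmax * - e \<le> 1"
  shows "Gfun \<gamma> n b \<pi> e \<le> 2 * bmax"
proof -
  have "b j * \<pi> j / (1 + \<gamma> * b j * e) \<le> 2 * bmax * \<pi> j" if "j < n" for j
  proof -
    have bj: "0 < b j" "0 < \<pi> j" "b j \<le> bmax" using b_pos \<pi>_pos b_le_bmax that by auto
    have "\<gamma> * b j * - e \<le> \<gamma> * bmax * - e"
      using bj assms(1) \<gamma>_pos by (intro mult_right_mono) auto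
    then have "1 / 2 \<le> 1 + \<gamma> * b j * e" using assms(2) by simp
    then have "b j * \<pi> j / (1 + \<gamma> * b j * e) \<le> b j * \<pi> j / (1 / 2)"
      using bj by (intro divide_left_mono) auto
    also have "\<dots> \<le> 2 * bmax * \<pi> j" using bj by (simp add: mult_right_mono)
    finally show ?thesis .
  qed
  then have "Gfun \<gamma> n b \<pi> e \<le> (\<Sum>j<n. 2 * bmax * \<pi> j)"
    unfolding Gfun_def by (intro sum_mono) auto
  then show ?thesis by (simp add: sum_distrib_left[symmetric] \<pi>_sum)
qed

lemma pole_factor_nonneg_if_large:
  assumes "e = resolvent_sum l x" "x * e \<le> 0" "(l - T) * (x * - e) \<le> T"
    and "0 < T" "2 * T \<le> l" "2 * amax * \<gamma> * bmax \<le> l"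
  shows "0 \<le> 1 + \<gamma> * bmax * e"
proof (rule ccontr)
  assume "\<not> ?thesis"
  then have big: "1 < \<gamma> * bmax * - e" by simp
  have gB: "0 < \<gamma> * bmax" using \<gamma>_pos bmax_pos by simp
  have "e < 0" using big gB by (smt (verit) mult_nonneg_nonpos)
  then have x: "0 \<le> x" using assms(2) by (simp add: mult_le_0_iff)
  have "(l - T) * x \<le> (l - T) * x * (\<gamma> * bmax * - e)"
    using big x assms(4,5) mult_left_mono[of 1 "\<gamma> * bmax * - e" "(l - T) * x"] by simp
  also have "\<dots> = \<gamma> * bmax * ((l - T) * (x * - e))" by (simp add: algebra_simps)
  also have "\<dots> \<le> \<gamma> * bmax * T" using assms(3) gB by (intro mult_left_mono) auto
  finally have "T * x \<le> T * (\<gamma> * bmax)"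
    using x assms(5) mult_right_mono[of T "l - T" x] by (simp add: algebra_simps)
  then have "x \<le> \<gamma> * bmax" using assms(4) by simp
  then have "amax * x \<le> amax * (\<gamma> * bmax)" using amax_pos by (intro mult_left_mono) auto
  then have "2 * amax * x \<le> l" using assms(6) by (simp add: algebra_simps)
  then have "- 2 * amax \<le> l * e"
    using resolvent_sum_lower_bound x assms(1,4,5) by simp
  then have "l * (\<gamma> * bmax * - e) \<le> l * 1"
    using assms(6) gB mult_left_mono[of "l * - e" "2 * amax" "\<gamma> * bmax"]
    by (simp add: algebra_simps)
  then have "\<gamma> * bmax * - e \<le> 1" by (rule mult_left_le_imp_le) (use assms(4,5) in simp)
  with big show False by simp
qed

lemma amax_Gfun_le_if_large:
  assumes "Gfun \<gamma> n b \<pi> e * e \<le> 0" "(l - T) * (Gfun \<gamma> n b \<pi> e * - e) \<le> T"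
    and "0 < T" "2 * T \<le> l" "2 * amax * \<gamma> * bmax \<le> l" "2 * amax * bmax \<le> l"
  shows "amax * Gfun \<gamma> n b \<pi> e \<le> l"
proof (rule ccontr)
  define x where "x = Gfun \<gamma> n b \<pi> e"
  assume "\<not> ?thesis"
  then have big: "l < amax * x" unfolding x_def by simp
  then have "0 < x" using amax_pos assms(3,4) by (smt (verit) mult_nonneg_nonpos)
  then have e: "e \<le> 0" using assms(1) unfolding x_def by (simp add: mult_le_0_iff)
  have "T * (x * - e) \<le> (l - T) * (x * - e)"
    using \<open>0 < x\<close> e assms(4) by (intro mult_right_mono mult_nonneg_nonneg) auto
  then have "T * (x * - e) \<le> T * 1" using assms(2) unfolding x_def by simp
  then have "x * - e \<le> 1" by (rule mult_left_le_imp_le) (use assms(3) in simp)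
  then have "l * - e \<le> amax"
    using big e amax_pos mult_right_mono[of l "amax * x" "- e"] mult_left_mono[of "x * - e" 1 amax]
    by (simp add: algebra_simps)
  then have "l * (2 * \<gamma> * bmax * - e) \<le> l * 1"
    using assms(5) \<gamma>_pos bmax_pos mult_left_mono[of "l * - e" amax "2 * \<gamma> * bmax"]
    by (simp add: algebra_simps)
  then have "2 * \<gamma> * bmax * - e \<le> 1" by (rule mult_left_le_imp_le) (use assms(3,4) in simp)
  then have "x \<le> 2 * bmax" unfolding x_def by (rule Gfun_le_twice_bmax[OF e])
  then have "amax * x \<le> amax * (2 * bmax)" using amax_pos by (intro mult_left_mono) auto
  then have "amax * x \<le> l" using assms(6) by (simp add: algebra_simps)
  with big show False by simp
qed

lemma branch_in_domain:
  fixes e :: "real \<Rightarrow> real"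
  assumes "0 < T" "continuous_on {T<..} e"
    and nopole: "\<forall>l>T. \<forall>j<n. 1 + \<gamma> * b j * e l \<noteq> 0"
    and ne: "\<forall>l>T. \<forall>i<p. a i * Gfun \<gamma> n b \<pi> (e l) \<noteq> l"
    and res: "\<And>l. T < l \<Longrightarrow> e l = resolvent_sum l (Gfun \<gamma> n b \<pi> (e l))"
    and product: "\<And>l. T < l \<Longrightarrow> Gfun \<gamma> n b \<pi> (e l) * e l \<le> 0"
      "\<And>l. T < l \<Longrightarrow> (l - T) * (Gfun \<gamma> n b \<pi> (e l) * - e l) \<le> T"
    and "T < l"
  shows "0 < 1 + \<gamma> * bmax * e l" "amax * Gfun \<gamma> n b \<pi> (e l) < l"
proof -
  let ?G = "\<lambda>l. Gfun \<gamma> n b \<pi> (e l)"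
  define l0 where "l0 = 2 * T + 2 * amax * \<gamma> * bmax + 2 * amax * bmax"
  have l0: "T < l0" "2 * T \<le> l0" "2 * amax * \<gamma> * bmax \<le> l0" "2 * amax * bmax \<le> l0"
    unfolding l0_def using assms(1) amax_pos bmax_pos \<gamma>_pos
    by (auto intro!: add_pos_pos mult_pos_pos)
  obtain i0 j0 where "i0 < p" "a i0 = amax" "j0 < n" "b j0 = bmax"
    using amax_attained bmax_attained by blast
  show "0 < 1 + \<gamma> * bmax * e l"
  proof (rule continuous_on_nonzero_pos_imp_pos[of "{T<..}" "\<lambda>l. 1 + \<gamma> * bmax * e l" l0])
    show "continuous_on {T<..} (\<lambda>l. 1 + \<gamma> * bmax * e l)"
      by (intro continuous_intros assms(2))
    show nonzero: "\<forall>z\<in>{T<..}. 1 + \<gamma> * bmax * e z \<noteq> 0"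
      using nopole \<open>j0 < n\<close> \<open>b j0 = bmax\<close> by (metis greaterThan_iff)
    show "0 < 1 + \<gamma> * bmax * e l0"
      using pole_factor_nonneg_if_large[OF res product] assms(1) l0 nonzero
      by (simp add: order_less_le)
  qed (use assms(8) l0(1) in auto)
  have "0 < l - amax * ?G l"
  proof (rule continuous_on_nonzero_pos_imp_pos[of "{T<..}" "\<lambda>l. l - amax * ?G l" l0])
    show "continuous_on {T<..} (\<lambda>l. l - amax * ?G l)"
      unfolding Gfun_def by (intro continuous_intros assms(2)) (use nopole in auto)
    show nonzero: "\<forall>z\<in>{T<..}. z - amax * ?G z \<noteq> 0"
      using ne \<open>i0 < p\<close> \<open>a i0 = amax\<close> by (metis greaterThan_iff eq_iff_diff_eq_0)
    show "0 < l0 - amax * ?G l0"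
      using amax_Gfun_le_if_large[OF product] assms(1) l0 nonzero
      by (simp add: order_less_le)
  qed (use assms(8) l0(1) in auto)
  then show "amax * ?G l < l" by simp
qed

end

theorem proposition3p1:
  fixes \<gamma> :: real and p n :: nat and a \<omega> b \<pi> :: "nat \<Rightarrow> real"
    and \<mu> :: "real measure" and e :: "real \<Rightarrow> real" and lstar :: real
  assumes \<gamma>_pos: "\<gamma> > 0"
    and p_pos: "p \<ge> 1" and n_pos: "n \<ge> 1"
    and a_pos: "\<forall>i<p. a i > 0" and \<omega>_pos: "\<forall>i<p. \<omega> i > 0" and \<omega>_sum: "(\<Sum>i<p. \<omega> i) = 1"
    and b_pos: "\<forall>j<n. b j > 0" and \<pi>_pos: "\<forall>j<n. \<pi> j > 0" and \<pi>_sum: "(\<Sum>j<n. \<pi> j) = 1"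
    and \<mu>_prob: "prob_space \<mu>" and \<mu>_borel: "sets \<mu> = sets borel"
    and supp_nonneg: "msupp \<mu> \<subseteq> {0..}" and supp_bdd: "bounded (msupp \<mu>)"
    and lstar_def: "lstar = Sup (msupp \<mu>)" and lstar_pos: "lstar > 0"
    and e_cont: "continuous_on {lstar<..} e"
    and e_nopole: "\<forall>l>lstar. \<forall>j<n. 1 + \<gamma> * b j * e l \<noteq> 0"
    and e_ne: "\<forall>l>lstar. \<forall>i<p. a i * Gfun \<gamma> n b \<pi> (e l) \<noteq> l"
    and s_eq: "\<forall>l>lstar. stieltjes \<mu> l = (\<Sum>i<p. \<omega> i / (a i * Gfun \<gamma> n b \<pi> (e l) - l))"
    and e_eq: "\<forall>l>lstar. e l = (\<Sum>i<p. a i * \<omega> i / (a i * Gfun \<gamma> n b \<pi> (e l) - l))"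
    and l_gt: "l > lstar"
  shows "e l \<in> Ilam \<gamma> n b \<pi> (Max (a ` {..<p})) (Max (b ` {..<n})) l \<inter> {..<0}
    \<and> e l > - 1 / (\<gamma> * Max (b ` {..<n}))
    \<and> Gfun \<gamma> n b \<pi> (e l) < l / Max (a ` {..<p})
    \<and> e l < 0"
proof -
  interpret spectral_weights \<gamma> p n a \<omega> b \<pi> using assms by unfold_locales auto
  let ?G = "\<lambda>l. Gfun \<gamma> n b \<pi> (e l)"
  have supp: "msupp \<mu> \<subseteq> {0..lstar}"
    using supp_nonneg cSup_upper[OF _ bounded_imp_bdd_above[OF supp_bdd]] lstar_def by auto
  have e_res: "e l = resolvent_sum l (?G l)" if "l > lstar" for l
    using e_eq that unfolding resolvent_sum_def by blast
  have product: "?G l * e l \<le> 0" "(l - lstar) * (?G l * - e l) \<le> lstar" if "l > lstar" for l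
    using resolvent_product_bounds[OF \<mu>_prob \<mu>_borel supp _ that, of "?G l"]
      e_ne s_eq e_res[OF that] that lstar_pos by auto
  have pole: "0 < 1 + \<gamma> * bmax * e l" and edge: "amax * ?G l < l"
    using branch_in_domain[OF lstar_pos e_cont e_nopole e_ne e_res product l_gt] by auto
  have "e l < 0"
    using resolvent_sum_neg[OF edge] e_res[OF l_gt] l_gt lstar_pos by linarith
  moreover have "?G l < l / amax"
    using edge amax_pos by (simp add: pos_less_divide_eq mult.commute)
  moreover have "- 1 / (\<gamma> * bmax) < e l"
    using pole \<gamma>_pos bmax_pos by (simp add: field_simps)
  ultimately show ?thesis
    unfolding Ilam_def amax_def[symmetric] bmax_def[symmetric] by auto
qed

end
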